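(* Fix a directed edge set $\mathcal{E}\subseteq\{(k,i)\in[n]^2: k\neq i\}$ and a randomized design (a probability distribution for ${\bf z}\in\{0,1\}^n$) with $0<\mathbb{E}[z_i]<1$ for all $i\in[n]$. Suppose the individually weighted linear estimator $\hat{\mathrm{est}}({\bf w},{\bf v})=\sum_{i\in[n]}\big(w_iz_i+v_i(1-z_i)\big)Y_i({\bf z})$ is unbiased for $\mathrm{TTE}$ under the heterogeneous additive network effects model with edge set $\mathcal{E}$, i.e. $\mathbb{E}[\hat{\mathrm{est}}({\bf w},{\bf v})]=\mathrm{TTE}$ for every choice of real parameters $\{\alpha_i\}_{i\in[n]}$, $\{\beta_i\}_{i\in[n]}$, $\{\gamma_{ki}\}_{(k,i)\in\mathcal{E}}$. Then necessarily $w_i=\frac{1}{n\mathbb{E}[z_i]}$ and $v_i=-\frac{1}{n\mathbb{E}[1-z_i]}$ for all $i$, i.e. \[\hat{\mathrm{est}}({\bf w},{\bf v})=\frac1n\sum_{i\in[n]}\Big(\frac{z_i}{\mathbb{E}[z_i]}-\frac{1-z_i}{\mathbb{E}[1-z_i]}\Big)Y_i({\bf z}),\] and the design must satisfy $\mathbb{P}(z_k=z_i)=1$ for all $(k,i)\in\mathcal{E}$.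
   Context: Population $[n]=\{1,\dots,n\}$; treatment vector ${\bf z}=(z_1,\dots,z_n)\in\{0,1\}^n$ is random, drawn from a distribution called the randomized design. Heterogeneous additive network effects model: for real parameters $\alpha_i$ (baseline), $\beta_i$ (direct effect) and $\gamma_{ki}$ (effect of $k$'s treatment on $i$), the potential outcomes are $Y_i({\bf z})=\alpha_i+\beta_iz_i+\sum_{k\in[n]}\gamma_{ki}z_k$, where $\gamma_{ki}=0$ unless $(k,i)\in\mathcal{E}$, and $\mathcal{E}$ is a set of ordered pairs $(k,i)$ with $k\neq i$ (the network). The parameters are deterministic; all expectations are over ${\bf z}$. Total treatment effect: $\mathrm{TTE}=\frac1n\sum_{i}(Y_i({\bf 1})-Y_i({\bf 0}))=\frac1n\big(\sum_i\beta_i+\sum_{(k,i)\in\mathcal{E}}\gamma_{ki}\big)$. An individually weighted linear estimator is $\hat{\mathrm{est}}({\bf w},{\bf v})=\sum_{i}(w_iz_i+v_i(1-z_i))Y_i({\bf z})$ with deterministic real weights ${\bf w},{\bf v}$ not depending on ${\bf z}$. *)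

theory Defs
  imports "HOL-Probability.Probability"
begin

text \<open>Treatment vectors are functions z :: nat => bool; unit i (i < n) is treated iff z i.
  The population [n] is represented by the indices {0..<n}.\<close>

definition ind :: "bool \<Rightarrow> real" where
  "ind b = (if b then 1 else 0)"

definition outcome :: "nat \<Rightarrow> (nat \<Rightarrow> real) \<Rightarrow> (nat \<Rightarrow> real) \<Rightarrow> (nat \<Rightarrow> nat \<Rightarrow> real)
    \<Rightarrow> (nat \<Rightarrow> bool) \<Rightarrow> nat \<Rightarrow> real" where
  "outcome n \<alpha> \<beta> \<gamma> z i = \<alpha> i + \<beta> i * ind (z i) + (\<Sum>k<n. \<gamma> k i * ind (z k))"

text \<open>Total treatment effect (gamma is assumed to vanish off the edge set).\<close>
definition TTE :: "nat \<Rightarrow> (nat \<times> nat) set \<Rightarrow> (nat \<Rightarrow> real) \<Rightarrow> (nat \<Rightarrow> nat \<Rightarrow> real) \<Rightarrow> real" where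
  "TTE n E \<beta> \<gamma> = (1 / real n) * ((\<Sum>i<n. \<beta> i) + (\<Sum>(k,i)\<in>E. \<gamma> k i))"

definition est :: "nat \<Rightarrow> (nat \<Rightarrow> real) \<Rightarrow> (nat \<Rightarrow> real) \<Rightarrow> (nat \<Rightarrow> real) \<Rightarrow> (nat \<Rightarrow> real)
    \<Rightarrow> (nat \<Rightarrow> nat \<Rightarrow> real) \<Rightarrow> (nat \<Rightarrow> bool) \<Rightarrow> real" where
  "est n w v \<alpha> \<beta> \<gamma> z =
     (\<Sum>i<n. (w i * ind (z i) + v i * (1 - ind (z i))) * outcome n \<alpha> \<beta> \<gamma> z i)"

end

theory Submission
  imports Defs
begin

text \<open>Unbiasedness must hold in particular for the elementary models in which a single
  parameter \<open>\<alpha>\<^sub>j\<close>, \<open>\<beta>\<^sub>j\<close> or \<open>\<gamma>\<^sub>k\<^sub>i\<close> equals one and all others vanish. Writing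
  \<open>\<pi>\<^sub>i = E[z\<^sub>i]\<close>, the first two give \<open>w\<^sub>j\<pi>\<^sub>j + v\<^sub>j(1 - \<pi>\<^sub>j) = 0\<close> and \<open>w\<^sub>j\<pi>\<^sub>j = 1/n\<close>, which
  determine the weights. With these weights the third reads
  \<open>P(z\<^sub>i \<and> z\<^sub>k)/\<pi>\<^sub>i - P(\<not>z\<^sub>i \<and> z\<^sub>k)/(1 - \<pi>\<^sub>i) = 1\<close>; since the first term is at most one and
  the second is nonnegative, both \<open>P(\<not>z\<^sub>i \<and> z\<^sub>k)\<close> and \<open>P(z\<^sub>i \<and> \<not>z\<^sub>k)\<close> vanish, i.e.
  \<open>z\<^sub>k = z\<^sub>i\<close> almost surely.\<close>

definition unbiased_TTE ::
    "nat \<Rightarrow> (nat \<times> nat) set \<Rightarrow> (nat \<Rightarrow> bool) pmf \<Rightarrow> (nat \<Rightarrow> real) \<Rightarrow> (nat \<Rightarrow> real) \<Rightarrow> bool" where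
  "unbiased_TTE n E p w v \<longleftrightarrow>
     (\<forall>\<alpha> \<beta> \<gamma>. (\<forall>k i. (k, i) \<notin> E \<longrightarrow> \<gamma> k i = 0) \<longrightarrow>
        measure_pmf.expectation p (est n w v \<alpha> \<beta> \<gamma>) = TTE n E \<beta> \<gamma>)"

definition kronecker :: "'a \<Rightarrow> 'a \<Rightarrow> real" where
  "kronecker a x = (if x = a then 1 else 0)"

lemma sum_kronecker_mult:
  assumes "finite A"
  shows "(\<Sum>x\<in>A. kronecker a x * f x) = (if a \<in> A then f a else 0)"
proof -
  have "(\<Sum>x\<in>A. kronecker a x * f x) = (\<Sum>x\<in>A. if x = a then f x else 0)"
    by (rule sum.cong) (auto simp: kronecker_def)
  then show ?thesis
    using assms by simp
qed

lemma kronecker_Pair: "kronecker (a, b) (x, y) = kronecker a x * kronecker b y"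
  by (simp add: kronecker_def)

lemma one_minus_ind: "1 - ind a = ind (\<not> a)"
  by (simp add: ind_def)

lemma integrable_ind [simp]: "integrable (measure_pmf p) (\<lambda>z. ind (P z))"
  by (rule measure_pmf.integrable_const_bound[where B = 1]) (auto simp: ind_def)

lemma expectation_ind: "measure_pmf.expectation p (\<lambda>z. ind (P z)) = measure_pmf.prob p {z. P z}"
proof -
  have "(\<lambda>z. ind (P z)) = indicator {z. P z}"
    by (auto simp: ind_def indicator_def)
  then show ?thesis
    by simp
qed

lemma expectation_ind_not:
  "measure_pmf.expectation p (\<lambda>z. ind (\<not> P z)) = 1 - measure_pmf.expectation p (\<lambda>z. ind (P z))"
proof -
  have "{z. \<not> P z} = space (measure_pmf p) - {z. P z}"
    by auto
  then show ?thesis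
    using measure_pmf.prob_compl[of "{z. P z}" p] by (simp add: expectation_ind)
qed

lemma est_kronecker_alpha:
  assumes "j < n"
  shows "est n w v (kronecker j) (\<lambda>_. 0) (\<lambda>_ _. 0) z = w j * ind (z j) + v j * ind (\<not> z j)"
  using assms
  by (simp add: est_def outcome_def mult.commute[of _ "kronecker j _"] sum_kronecker_mult one_minus_ind)

lemma est_kronecker_beta:
  assumes "j < n"
  shows "est n w v (\<lambda>_. 0) (kronecker j) (\<lambda>_ _. 0) z = w j * ind (z j)"
proof -
  have "est n w v (\<lambda>_. 0) (kronecker j) (\<lambda>_ _. 0) z
      = (\<Sum>i<n. kronecker j i * ((w i * ind (z i) + v i * (1 - ind (z i))) * ind (z i)))"
    by (simp add: est_def outcome_def algebra_simps)
  then show ?thesis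
    using assms by (simp add: sum_kronecker_mult ind_def)
qed

lemma est_kronecker_gamma:
  assumes "k < n" "i < n"
  shows "est n w v (\<lambda>_. 0) (\<lambda>_. 0) (curry (kronecker (k, i))) z
           = w i * ind (z i \<and> z k) + v i * ind (\<not> z i \<and> z k)"
proof -
  have "outcome n (\<lambda>_. 0) (\<lambda>_. 0) (curry (kronecker (k, i))) z m
      = kronecker i m * (\<Sum>l<n. kronecker k l * ind (z l))" for m
    unfolding outcome_def sum_distrib_left by (simp add: kronecker_Pair mult_ac)
  then have "outcome n (\<lambda>_. 0) (\<lambda>_. 0) (curry (kronecker (k, i))) z m = kronecker i m * ind (z k)" for m
    using assms by (simp add: sum_kronecker_mult)
  then have "est n w v (\<lambda>_. 0) (\<lambda>_. 0) (curry (kronecker (k, i))) z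
      = (\<Sum>m<n. kronecker i m * ((w m * ind (z m) + v m * (1 - ind (z m))) * ind (z k)))"
    by (simp add: est_def mult.left_commute[of _ "kronecker i _"])
  then show ?thesis
    using assms by (simp add: sum_kronecker_mult ind_def)
qed

lemma TTE_kronecker_gamma:
  assumes "finite E" "(k, i) \<in> E"
  shows "TTE n E (\<lambda>_. 0) (curry (kronecker (k, i))) = 1 / real n"
proof -
  have "(\<Sum>(a, b)\<in>E. curry (kronecker (k, i)) a b) = (\<Sum>x\<in>E. kronecker (k, i) x)"
    by (simp add: case_prod_beta)
  also have "\<dots> = 1"
    using assms by (simp add: kronecker_def sum.delta')
  finally show ?thesis by (simp add: TTE_def)
qed

lemma unbiased_TTE_weights:
  assumes unbiased: "unbiased_TTE n E p w v" and "j < n"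
    and pos: "0 < measure_pmf.expectation p (\<lambda>z. ind (z j))"
    and less_one: "measure_pmf.expectation p (\<lambda>z. ind (z j)) < 1"
  defines "\<pi> \<equiv> measure_pmf.expectation p (\<lambda>z. ind (z j))"
  shows "w j = 1 / (real n * \<pi>)" and "v j = - 1 / (real n * (1 - \<pi>))"
proof -
  have "measure_pmf.expectation p (est n w v (kronecker j) (\<lambda>_. 0) (\<lambda>_ _. 0)) = 0"
    using unbiased by (simp add: unbiased_TTE_def TTE_def)
  then have alpha: "w j * \<pi> + v j * (1 - \<pi>) = 0"
    by (simp add: est_kronecker_alpha[OF \<open>j < n\<close>, abs_def] \<pi>_def expectation_ind_not
        Bochner_Integration.integral_add integrable_mult_right)
  have "measure_pmf.expectation p (est n w v (\<lambda>_. 0) (kronecker j) (\<lambda>_ _. 0)) = 1 / real n"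
    using unbiased \<open>j < n\<close> by (simp add: unbiased_TTE_def TTE_def kronecker_def)
  then have beta: "w j * \<pi> = 1 / real n"
    by (simp add: est_kronecker_beta[OF \<open>j < n\<close>, abs_def] \<pi>_def)
  have "0 < \<pi>" "\<pi> < 1" "0 < real n"
    using pos less_one \<open>j < n\<close> by (simp_all add: \<pi>_def)
  with beta show "w j = 1 / (real n * \<pi>)"
    by (simp add: field_simps)
  from alpha beta have "v j * (1 - \<pi>) = - 1 / real n"
    by linarith
  with \<open>\<pi> < 1\<close> \<open>0 < real n\<close> show "v j = - 1 / (real n * (1 - \<pi>))"
    by (simp add: field_simps)
qed

lemma prob_agree_eq_1:
  fixes p :: "'a pmf" and P Q :: "'a \<Rightarrow> bool"
  defines "\<pi> \<equiv> measure_pmf.prob p {z. P z}"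
    and "a \<equiv> measure_pmf.prob p {z. P z \<and> Q z}"
    and "b \<equiv> measure_pmf.prob p {z. \<not> P z \<and> Q z}"
  assumes "0 < \<pi>" "\<pi> < 1" and "a / \<pi> - b / (1 - \<pi>) = 1"
  shows "measure_pmf.prob p {z. Q z = P z} = 1"
proof -
  define c where "c = measure_pmf.prob p {z. P z \<and> \<not> Q z}"
  have "{z. P z} = {z. P z \<and> Q z} \<union> {z. P z \<and> \<not> Q z}"
    by auto
  then have "\<pi> = a + c"
    unfolding \<pi>_def a_def c_def by (subst measure_pmf.finite_measure_Union[symmetric]) auto
  have "0 \<le> b" "0 \<le> c"
    unfolding b_def c_def by simp_all
  have "a / \<pi> \<le> 1"
    using \<open>\<pi> = a + c\<close> \<open>0 \<le> c\<close> \<open>0 < \<pi>\<close> by simp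
  moreover have "0 \<le> b / (1 - \<pi>)"
    using \<open>0 \<le> b\<close> \<open>\<pi> < 1\<close> by simp
  ultimately have "a / \<pi> = 1" "b / (1 - \<pi>) = 0"
    using \<open>a / \<pi> - b / (1 - \<pi>) = 1\<close> by linarith+
  then have "b = 0" "c = 0"
    using \<open>\<pi> = a + c\<close> \<open>0 < \<pi>\<close> \<open>\<pi> < 1\<close> by simp_all
  have "{z. Q z = P z} = space (measure_pmf p) - ({z. \<not> P z \<and> Q z} \<union> {z. P z \<and> \<not> Q z})"
    by auto
  then have "measure_pmf.prob p {z. Q z = P z} = 1 - (b + c)"
    using measure_pmf.prob_compl[of "{z. \<not> P z \<and> Q z} \<union> {z. P z \<and> \<not> Q z}" p]
    unfolding b_def c_def by (simp add: measure_pmf.finite_measure_Union disjoint_iff)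
  with \<open>b = 0\<close> \<open>c = 0\<close> show ?thesis
    by simp
qed

lemma unbiased_TTE_edge_agree:
  assumes unbiased: "unbiased_TTE n E p w v"
    and E: "E \<subseteq> {(k, i). k < n \<and> i < n \<and> k \<noteq> i}" and "(k, i) \<in> E"
    and pos: "0 < measure_pmf.expectation p (\<lambda>z. ind (z i))"
    and less_one: "measure_pmf.expectation p (\<lambda>z. ind (z i)) < 1"
  shows "measure_pmf.prob p {z. z k = z i} = 1"
proof -
  define \<pi> where "\<pi> = measure_pmf.prob p {z. z i}"
  define a where "a = measure_pmf.prob p {z. z i \<and> z k}"
  define b where "b = measure_pmf.prob p {z. \<not> z i \<and> z k}"
  have "k < n" "i < n"
    using E \<open>(k, i) \<in> E\<close> by auto
  have "finite E"
    by (rule finite_subset[of _ "{..<n} \<times> {..<n}"]) (use E in auto)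
  have "\<forall>a b. (a, b) \<notin> E \<longrightarrow> curry (kronecker (k, i)) a b = 0"
    using \<open>(k, i) \<in> E\<close> by (auto simp: kronecker_def)
  then have "measure_pmf.expectation p (est n w v (\<lambda>_. 0) (\<lambda>_. 0) (curry (kronecker (k, i)))) = 1 / real n"
    using unbiased TTE_kronecker_gamma[OF \<open>finite E\<close> \<open>(k, i) \<in> E\<close>] by (simp add: unbiased_TTE_def)
  then have "w i * a + v i * b = 1 / real n"
    by (simp add: est_kronecker_gamma[OF \<open>k < n\<close> \<open>i < n\<close>, abs_def] expectation_ind a_def b_def)
  moreover have "w i = 1 / (real n * \<pi>)" "v i = - 1 / (real n * (1 - \<pi>))"
    using unbiased_TTE_weights[OF unbiased \<open>i < n\<close> pos less_one] by (simp_all add: \<pi>_def expectation_ind)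
  ultimately have "(a / \<pi> - b / (1 - \<pi>)) / real n = 1 / real n"
    by (simp add: diff_divide_distrib mult.commute)
  then have "a / \<pi> - b / (1 - \<pi>) = 1"
    using \<open>i < n\<close> by simp
  then show ?thesis
    using prob_agree_eq_1[of p "\<lambda>z. z i" "\<lambda>z. z k"] pos less_one
    by (simp add: \<pi>_def a_def b_def expectation_ind)
qed

theorem theorem1:
  fixes n :: nat and E :: "(nat \<times> nat) set" and p :: "(nat \<Rightarrow> bool) pmf"
    and w v :: "nat \<Rightarrow> real"
  assumes E: "E \<subseteq> {(k, i). k < n \<and> i < n \<and> k \<noteq> i}"
    and design: "set_pmf p \<subseteq> {z. \<forall>i. n \<le> i \<longrightarrow> \<not> z i}"
    and nondeg: "\<And>i. i < n \<Longrightarrow>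
        0 < measure_pmf.expectation p (\<lambda>z. ind (z i)) \<and>
        measure_pmf.expectation p (\<lambda>z. ind (z i)) < 1"
    and unbiased: "\<And>\<alpha> \<beta> \<gamma>. (\<forall>k i. (k, i) \<notin> E \<longrightarrow> \<gamma> k i = 0) \<Longrightarrow>
        measure_pmf.expectation p (est n w v \<alpha> \<beta> \<gamma>) = TTE n E \<beta> \<gamma>"
  shows "(\<forall>i<n. w i = 1 / (real n * measure_pmf.expectation p (\<lambda>z. ind (z i))) \<and>
                 v i = - 1 / (real n * measure_pmf.expectation p (\<lambda>z. 1 - ind (z i))))
       \<and> (\<forall>(k, i)\<in>E. measure_pmf.prob p {z. z k = z i} = 1)"
proof -
  have unbiased_TTE: "unbiased_TTE n E p w v"
    using unbiased by (simp add: unbiased_TTE_def)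
  have "w i = 1 / (real n * measure_pmf.expectation p (\<lambda>z. ind (z i)))"
    and "v i = - 1 / (real n * measure_pmf.expectation p (\<lambda>z. 1 - ind (z i)))" if "i < n" for i
    using unbiased_TTE_weights[OF unbiased_TTE that] nondeg[OF that]
    by (simp_all add: one_minus_ind expectation_ind_not)
  moreover have "measure_pmf.prob p {z. z k = z i} = 1" if "(k, i) \<in> E" for k i
    using unbiased_TTE_edge_agree[OF unbiased_TTE E that] nondeg E that by blast
  ultimately show ?thesis
    by blast
qed

end
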